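(* Let $s_1,s_2$ be integers and $t,r_1,r_2$ nonnegative integers with $r_1\ge t$. Then in $\mathbb{Z}[x]$, $$\varphi^{s_1+t,\,s_2}_{r_1-t,\,r_2}(x)=\varphi^{s_1-t,\,s_2}_{r_1-t,\,r_2}(x)-\sum_{m=1}^{2t}\binom{2t}{m}\binom{r_1-t}{m}\,2^m\,m!\;\varphi^{s_1+t,\,s_2}_{r_1-t-m,\,r_2}(x).$$
   Context: For integers $a,b$ and integers $n,m$ define the polynomial $$\varphi^{a,b}_{n,m}(x)=\prod_{j=0}^{n-1}\bigl(x^2-x-2(a+j)\bigr)\prod_{l=0}^{m-1}\bigl(x-(b+l)\bigr)$$ when $n,m\ge0$ (empty products equal $1$), and $\varphi^{a,b}_{n,m}(x)=0$ if $n<0$ or $m<0$. (In the paper this is written $\varphi^{a,b}_{2n+m}(x)$.) Binomial coefficients $\binom{N}{m}$ are $0$ when $m>N$. *)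

theory Defs
  imports "HOL-Computational_Algebra.Polynomial"
begin

definition phi :: "int \<Rightarrow> int \<Rightarrow> int \<Rightarrow> int \<Rightarrow> int poly" where
  "phi a b n m =
     (if n < 0 \<or> m < 0 then 0
      else (\<Prod>j<nat n. [:- 2 * (a + int j), -1, 1:]) *
           (\<Prod>l<nat m. [:- (b + int l), 1:]))"

end

theory Submission
  imports Defs
begin

text \<open>Put \<open>y = x\<^sup>2 - x\<close>. The first product in \<open>phi a b n m\<close> is the step-\<open>(-2)\<close> rising
  factorial \<open>(y - 2a)(y - 2a - 2)\<cdots>(y - 2a - 2(n - 1))\<close>. Lowering \<open>a\<close> by \<open>k\<close> adds \<open>2k\<close> to its
  base, so the Vandermonde identity for step factorials expands \<open>phi (a - k) b n m\<close> as a
  combination of the \<open>phi a b (n - i) m\<close>, with coefficients \<open>n choose i\<close> times the step-\<open>(-2)\<close>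
  factorials of \<open>2k\<close>, namely \<open>2\<^sup>i k!/(k - i)!\<close>. The theorem is the case \<open>a = s\<^sub>1 + t\<close>, \<open>k = 2t\<close>,
  with the \<open>i = 0\<close> term moved to the other side.\<close>

definition step_pochhammer :: "'a::comm_ring_1 \<Rightarrow> 'a \<Rightarrow> nat \<Rightarrow> 'a" where
  "step_pochhammer h a n = (\<Prod>j<n. a + of_nat j * h)"

lemma step_pochhammer_0 [simp]: "step_pochhammer h a 0 = 1"
  by (simp add: step_pochhammer_def)

lemma step_pochhammer_Suc: "step_pochhammer h a (Suc n) = a * step_pochhammer h (a + h) n"
  unfolding step_pochhammer_def by (subst prod.lessThan_Suc_shift) (simp add: algebra_simps)

lemma step_pochhammer_Vandermonde:
  fixes a b h :: "'a::comm_ring_1"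
  shows "step_pochhammer h (a + b) n =
    (\<Sum>k\<le>n. of_nat (n choose k) * step_pochhammer h a k * step_pochhammer h b (n - k))"
proof (induction n arbitrary: a b)
  case 0
  then show ?case by simp
next
  case (Suc n a b)
  let ?P = "step_pochhammer h"
  have "(\<Sum>k\<le>Suc n. of_nat (Suc n choose k) * ?P a k * ?P b (Suc n - k)) =
      (\<Sum>i\<le>n. of_nat (n choose i) * ?P a (Suc i) * ?P b (n - i)) +
      ((\<Sum>i\<le>n. of_nat (n choose Suc i) * ?P a (Suc i) * ?P b (n - i)) + ?P b (Suc n))"
    by (subst sum.atMost_Suc_shift) (simp add: ring_distribs sum.distrib)
  also have "(\<Sum>i\<le>n. of_nat (n choose i) * ?P a (Suc i) * ?P b (n - i)) = a * ?P ((a + h) + b) n"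
    by (subst Suc) (simp add: sum_distrib_left step_pochhammer_Suc mult_ac)
  also have "(\<Sum>i\<le>n. of_nat (n choose Suc i) * ?P a (Suc i) * ?P b (n - i)) + ?P b (Suc n)
      = of_nat (n choose 0) * ?P a 0 * ?P b (Suc n - 0)
        + (\<Sum>i = Suc 0..Suc n. of_nat (n choose i) * ?P a i * ?P b (Suc n - i))"
    unfolding sum.shift_bounds_cl_Suc_ivl by (simp add: atLeast0AtMost)
  also have "\<dots> = (\<Sum>i\<le>n. of_nat (n choose i) * ?P a i * ?P b (Suc (n - i)))"
    by (simp add: sum.atLeast_Suc_atMost atLeast0AtMost[symmetric]
        sum.mono_neutral_right[of "{0..Suc n}" "{..n}"] binomial_eq_0 Suc_diff_le)
  also have "\<dots> = b * ?P (a + (b + h)) n"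
    by (subst Suc) (simp add: sum_distrib_left mult_ac step_pochhammer_Suc)
  also have "a * ?P ((a + h) + b) n + b * ?P (a + (b + h)) n = ?P (a + b) (Suc n)"
    by (simp add: step_pochhammer_Suc algebra_simps)
  finally show ?case ..
qed

lemma prod_of_nat_diff_eq_binomial_fact:
  "(\<Prod>j<m. of_nat k - of_nat j :: 'a::comm_ring_1) = of_nat ((k choose m) * fact m)"
proof -
  have "(\<Prod>j<m. int k - int j) = int ((k choose m) * fact m)"
    by (simp add: int_binomial gbinomial_int_mult_fact' atLeast0LessThan)
  then have "of_int (\<Prod>j<m. int k - int j) = (of_int (int ((k choose m) * fact m)) :: 'a)"
    by (rule arg_cong)
  then show ?thesis by (simp only: of_int_prod of_int_diff of_int_of_nat_eq)
qed

lemma step_pochhammer_minus_two: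
  "step_pochhammer (-2) (2 * of_nat k :: 'a::comm_ring_1) m = 2 ^ m * of_nat ((k choose m) * fact m)"
proof -
  have "step_pochhammer (-2) (2 * of_nat k :: 'a) m = (\<Prod>j<m. 2 * (of_nat k - of_nat j))"
    unfolding step_pochhammer_def by (intro prod.cong) (auto simp: algebra_simps)
  also have "\<dots> = 2 ^ m * (\<Prod>j<m. of_nat k - of_nat j)"
    by (simp only: prod.distrib prod_constant card_lessThan)
  finally show ?thesis by (simp add: prod_of_nat_diff_eq_binomial_fact)
qed

lemma phi_eq_step_pochhammer:
  "phi a b (int n) (int m) =
     step_pochhammer (-2) ([:0, -1, 1:] - [:2 * a:]) n * (\<Prod>l<m. [:- (b + int l), 1:])"
proof -
  have "[:- 2 * (a + int j), -1, 1:] = ([:0, -1, 1:] - [:2 * a:]) + of_nat j * (-2)" for j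
    by (rule poly_eqI) (auto simp: coeff_pCons of_nat_poly numeral_poly split: nat.split)
  then show ?thesis by (simp add: phi_def step_pochhammer_def)
qed

lemma phi_shift_expansion:
  "phi (a - int k) b (int n) (int m) =
     (\<Sum>i\<le>k. of_int (int (k choose i) * int (n choose i) * 2 ^ i * int (fact i))
               * phi a b (int n - int i) (int m))"
proof -
  let ?P = "step_pochhammer (-2 :: int poly)"
  define B where "B = [:0, -1, 1:] - [:2 * a:]"
  define G where "G = (\<Prod>l<m. [:- (b + int l), 1:])"
  have phi_lower: "phi a b (int n - int i) (int m) = ?P B (n - i) * G" if "i \<le> n" for i
    using phi_eq_step_pochhammer[of a b "n - i" m] that by (simp add: B_def G_def of_nat_diff)
  define summand where "summand i = of_int (int (k choose i) * int (n choose i) * 2 ^ i * int (fact i)) *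
    phi a b (int n - int i) (int m)" for i
  have "[:0, -1, 1:] - [:2 * (a - int k):] = 2 * of_nat k + B"
    by (simp add: B_def of_nat_poly numeral_poly algebra_simps)
  then have "phi (a - int k) b (int n) (int m) = ?P (2 * of_nat k + B) n * G"
    by (simp add: phi_eq_step_pochhammer G_def)
  also have "\<dots> = (\<Sum>i\<le>n. summand i)"
    unfolding step_pochhammer_Vandermonde sum_distrib_right
    by (intro sum.cong refl)
      (simp only: step_pochhammer_minus_two, simp add: summand_def phi_lower algebra_simps)
  also have "\<dots> = (\<Sum>i\<le>n + k. summand i)"
    by (intro sum.mono_neutral_left) (auto simp: summand_def binomial_eq_0)
  also have "\<dots> = (\<Sum>i\<le>k. summand i)"
    by (intro sum.mono_neutral_right) (auto simp: summand_def binomial_eq_0 phi_def)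
  finally show ?thesis by (simp add: summand_def)
qed

theorem lemma3p29:
  fixes s1 s2 :: int and t r1 r2 :: nat
  assumes "r1 \<ge> t"
  shows "phi (s1 + int t) s2 (int r1 - int t) (int r2) =
           phi (s1 - int t) s2 (int r1 - int t) (int r2)
           - (\<Sum>m = 1..2 * t. of_int (int ((2 * t) choose m) * int ((r1 - t) choose m)
                                * 2 ^ m * int (fact m))
                 * phi (s1 + int t) s2 (int r1 - int t - int m) (int r2))"
proof -
  have r1_t: "int r1 - int t = int (r1 - t)"
    using assms by simp
  have "s1 - int t = (s1 + int t) - int (2 * t)"
    by simp
  then have "phi (s1 - int t) s2 (int (r1 - t)) (int r2) =
      phi (s1 + int t) s2 (int (r1 - t)) (int r2)
      + (\<Sum>m = 1..2 * t. of_int (int ((2 * t) choose m) * int ((r1 - t) choose m)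
                            * 2 ^ m * int (fact m))
             * phi (s1 + int t) s2 (int (r1 - t) - int m) (int r2))"
    by (simp only: phi_shift_expansion atMost_atLeast0 sum.atLeast_Suc_atMost[OF le0]) simp
  then show ?thesis
    by (simp add: r1_t)
qed

end
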